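(* Let $n\in\mathbb N$ and let $W,W',M,M'$ be pairwise disjoint sets, each of cardinality $n$. There exist functions $\succ_{W\cup W'}:\mathcal P(W,M)\to\mathcal F(W\cup W',M\cup M')$ and $\succ_{M\cup M'}:\mathcal P(M,W)\to\mathcal F(M\cup M',W\cup W')$ such that for every $\succ_W\in\mathcal P(W,M)$, $\succ_M\in\mathcal P(M,W)$ and every (possibly imperfect) marriage $\mu$ between $W$ and $M$, the following are equivalent: (1) $\mu$ is stable with respect to $\succ_W$ and $\succ_M$; (2) $\mu$ is a submarriage of some marriage between $W\cup W'$ and $M\cup M'$ that is stable with respect to $\succ_{W\cup W'}(\succ_W)$ and $\succ_{M\cup M'}(\succ_M)$.
   Context: $\mathcal P(A,B)$ is the set of profiles assigning to each $a\in A$ a preference list, i.e. a totally ordered subset of $B$ (members of $B$ not on the list are unacceptable); $\mathcal F(A,B)\subseteq\mathcal P(A,B)$ consists of profiles in which every list contains all of $B$. A participant prefers $x$ over $x'$ if $x$ precedes $x'$ on their list, or $x$ is on the list and $x'$ is not (being single counts as being matched to someone off the list). A marriage is a one-to-one map between a subset of the women and a subset of the men. It is stable if every married participant is married to someone on their list and there is no blocking pair $(w,m)$ where $w$ prefers $m$ to her current situation and $m$ prefers $w$ to his. A marriage $\mu$ between subsets of $W\subseteq \widetilde W$ and $M\subseteq\widetilde M$ is a submarriage of a marriage $\mu'$ between $\widetilde W$ and $\widetilde M$ if for all $w\in W$, $m\in M$: $\mu'(w)=m$ iff $\mu(w)=m$. *)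

theory Defs
  imports Main
begin

text \<open>Participants of all four groups live in one type 'a. A profile assigns to every
  participant a list; a preference list is a repetition-free list (totally ordered subset).\<close>

definition profiles :: "'a set \<Rightarrow> 'a set \<Rightarrow> ('a \<Rightarrow> 'a list) set" where
  "profiles A B = {p. \<forall>a. (a \<in> A \<longrightarrow> distinct (p a) \<and> set (p a) \<subseteq> B) \<and> (a \<notin> A \<longrightarrow> p a = [])}"

definition full_profiles :: "'a set \<Rightarrow> 'a set \<Rightarrow> ('a \<Rightarrow> 'a list) set" where
  "full_profiles A B = {p \<in> profiles A B. \<forall>a\<in>A. set (p a) = B}"

definition precedes :: "'a list \<Rightarrow> 'a \<Rightarrow> 'a \<Rightarrow> bool" where
  "precedes l x y \<longleftrightarrow> (\<exists>i j. i < j \<and> j < length l \<and> l ! i = x \<and> l ! j = y)"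

text \<open>a prefers x over its current situation s (None = single, counts as off-list)\<close>
definition prefers :: "('a \<Rightarrow> 'a list) \<Rightarrow> 'a \<Rightarrow> 'a \<Rightarrow> 'a option \<Rightarrow> bool" where
  "prefers p a x s \<longleftrightarrow> x \<in> set (p a) \<and>
     (case s of None \<Rightarrow> True | Some y \<Rightarrow> precedes (p a) x y \<or> y \<notin> set (p a))"

definition marriage :: "'a set \<Rightarrow> 'a set \<Rightarrow> ('a \<times> 'a) set \<Rightarrow> bool" where
  "marriage W M \<mu> \<longleftrightarrow> \<mu> \<subseteq> W \<times> M \<and>
     (\<forall>w m m'. (w, m) \<in> \<mu> \<longrightarrow> (w, m') \<in> \<mu> \<longrightarrow> m = m') \<and>
     (\<forall>w w' m. (w, m) \<in> \<mu> \<longrightarrow> (w', m) \<in> \<mu> \<longrightarrow> w = w')"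

definition husband :: "('a \<times> 'a) set \<Rightarrow> 'a \<Rightarrow> 'a option" where
  "husband \<mu> w = (if \<exists>m. (w, m) \<in> \<mu> then Some (THE m. (w, m) \<in> \<mu>) else None)"

definition wife :: "('a \<times> 'a) set \<Rightarrow> 'a \<Rightarrow> 'a option" where
  "wife \<mu> m = (if \<exists>w. (w, m) \<in> \<mu> then Some (THE w. (w, m) \<in> \<mu>) else None)"

definition stable ::
  "'a set \<Rightarrow> 'a set \<Rightarrow> ('a \<Rightarrow> 'a list) \<Rightarrow> ('a \<Rightarrow> 'a list) \<Rightarrow> ('a \<times> 'a) set \<Rightarrow> bool" where
  "stable W M pW pM \<mu> \<longleftrightarrow>
     (\<forall>(w, m) \<in> \<mu>. m \<in> set (pW w) \<and> w \<in> set (pM m)) \<and>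
     \<not> (\<exists>w\<in>W. \<exists>m\<in>M. prefers pW w m (husband \<mu> w) \<and> prefers pM m w (wife \<mu> m))"

definition submarriage :: "'a set \<Rightarrow> 'a set \<Rightarrow> ('a \<times> 'a) set \<Rightarrow> ('a \<times> 'a) set \<Rightarrow> bool" where
  "submarriage W M \<mu> \<mu>' \<longleftrightarrow> (\<forall>w\<in>W. \<forall>m\<in>M. (w, m) \<in> \<mu>' \<longleftrightarrow> (w, m) \<in> \<mu>)"

end

theory Submission
  imports Defs
begin

text \<open>Every woman w of W gets a private dummy man \<sigma> w in M', whom she ranks right after her own
  list and who ranks her first; symmetrically every man m gets a dummy woman \<tau> m in W'. Being
  single in W \<union> M then corresponds to being married to one's dummy.

  Given a stable \<mu>, marry the singles to their dummies. The dummies left over, \<tau> of the married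
  men and \<sigma> of the married women, are equally many, and all of them rank each other by the same
  fixed orders eW and eM; pairing them assortatively along these orders gives a perfect, stable
  extension. Conversely, in a stable extension \<mu>' a pair (w, m) of \<mu> with m unacceptable to w
  would be blocked by (w, \<sigma> w), and a blocking pair of \<mu> would still block \<mu>'.\<close>

lemma precedes_Nil [simp]: "\<not> precedes [] x y"
  by (simp add: precedes_def)

lemma precedes_Cons [simp]:
  "precedes (a # l) x y \<longleftrightarrow> x = a \<and> y \<in> set l \<or> precedes l x y"
proof
  assume "precedes (a # l) x y"
  then obtain i j where ij: "i < j" "j < Suc (length l)" "(a # l) ! i = x" "(a # l) ! j = y"
    unfolding precedes_def by auto
  then obtain j' where j: "j = Suc j'" by (cases j) auto
  show "x = a \<and> y \<in> set l \<or> precedes l x y"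
  proof (cases i)
    case 0
    then show ?thesis using ij j by auto
  next
    case (Suc i')
    then have "precedes l x y" using ij j unfolding precedes_def by auto
    then show ?thesis ..
  qed
next
  assume "x = a \<and> y \<in> set l \<or> precedes l x y"
  then show "precedes (a # l) x y"
  proof
    assume "x = a \<and> y \<in> set l"
    then obtain k where "k < length l" "l ! k = y" by (auto simp: in_set_conv_nth)
    with \<open>x = a \<and> y \<in> set l\<close> show ?thesis
      unfolding precedes_def by (intro exI[of _ 0] exI[of _ "Suc k"]) auto
  next
    assume "precedes l x y"
    then obtain i j where "i < j" "j < length l" "l ! i = x" "l ! j = y"
      unfolding precedes_def by auto
    then show ?thesis
      unfolding precedes_def by (intro exI[of _ "Suc i"] exI[of _ "Suc j"]) auto
  qed
qed

lemma precedes_append: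
  "precedes (l1 @ l2) x y \<longleftrightarrow> precedes l1 x y \<or> x \<in> set l1 \<and> y \<in> set l2 \<or> precedes l2 x y"
  by (induction l1) auto

lemma precedes_imp_in_set: "precedes l x y \<Longrightarrow> x \<in> set l \<and> y \<in> set l"
  by (induction l) auto

lemma precedes_asym: "distinct l \<Longrightarrow> precedes l x y \<Longrightarrow> \<not> precedes l y x"
  by (induction l) (auto dest: precedes_imp_in_set)

lemma precedes_filter_iff: "P x \<Longrightarrow> P y \<Longrightarrow> precedes (filter P l) x y \<longleftrightarrow> precedes l x y"
  by (induction l) auto

lemma precedes_nth_iff:
  assumes "distinct l" "i < length l" "j < length l"
  shows "precedes l (l ! i) (l ! j) \<longleftrightarrow> i < j"
  using assms unfolding precedes_def by (auto simp: nth_eq_iff_index_eq)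

lemma precedes_zip_mono:
  assumes "distinct xs" "distinct ys" "(a, b) \<in> set (zip xs ys)" "(a', b') \<in> set (zip xs ys)"
    and "precedes xs a a'"
  shows "precedes ys b b'"
proof -
  obtain i where i: "i < length xs" "i < length ys" "a = xs ! i" "b = ys ! i"
    using assms(3) by (auto simp: set_zip)
  obtain j where j: "j < length xs" "j < length ys" "a' = xs ! j" "b' = ys ! j"
    using assms(4) by (auto simp: set_zip)
  show ?thesis
    using assms(5) i j precedes_nth_iff[OF assms(1)] precedes_nth_iff[OF assms(2)] by simp
qed

lemma precedes_append_Cons_prefixD:
  assumes "distinct (l @ d # r)" "h \<in> set (l @ [d])" "precedes (l @ d # r) y h"
  shows "y \<in> set l \<and> (h = d \<or> precedes l y h)"
proof -
  have d: "d \<notin> set r" "set l \<inter> set (d # r) = {}"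
    using assms(1) by auto
  then have "\<not> precedes (d # r) y h"
    using assms(2) by (auto dest: precedes_imp_in_set)
  then have "precedes l y h \<or> y \<in> set l \<and> h \<in> set (d # r)"
    using assms(3) unfolding precedes_append by blast
  then show ?thesis
  proof
    assume "precedes l y h"
    then show ?thesis using precedes_imp_in_set[of l y h] by simp
  next
    assume "y \<in> set l \<and> h \<in> set (d # r)"
    then show ?thesis using assms(2) d(2) by (auto simp: disjoint_iff)
  qed
qed

lemma precedes_append_leftI:
  assumes "y \<in> set l" "precedes l y h \<or> h \<notin> set l" "h \<in> set (l @ r)"
  shows "precedes (l @ r) y h"
  using assms unfolding precedes_append by auto

definition complete_list :: "'a list \<Rightarrow> 'a set \<Rightarrow> 'a list" where
  "complete_list l S = l @ (SOME r. distinct r \<and> set r = S - set l)"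

lemma complete_list_eq: obtains r where "complete_list l S = l @ r"
  by (simp add: complete_list_def)

lemma
  assumes "finite S" "distinct l" "set l \<subseteq> S"
  shows distinct_complete_list: "distinct (complete_list l S)"
    and set_complete_list: "set (complete_list l S) = S"
proof -
  have "finite (S - set l)"
    using assms(1) by simp
  then have "\<exists>r. distinct r \<and> set r = S - set l"
    using finite_distinct_list by blast
  then have "distinct (SOME r. distinct r \<and> set r = S - set l) \<and>
      set (SOME r. distinct r \<and> set r = S - set l) = S - set l"
    by (rule someI_ex)
  then show "distinct (complete_list l S)" "set (complete_list l S) = S"
    using assms unfolding complete_list_def by auto
qed

lemma prefers_Some_iff: "y \<in> set (p a) \<Longrightarrow> prefers p a x (Some y) \<longleftrightarrow> precedes (p a) x y"
  unfolding prefers_def using precedes_imp_in_set by fastforce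

lemma prefers_first_choice: "p a = x # l \<Longrightarrow> s \<noteq> Some x \<Longrightarrow> prefers p a x s"
  unfolding prefers_def by (auto split: option.split)

lemma husband_converse [simp]: "husband (\<mu>\<inverse>) = wife \<mu>"
  by (simp add: husband_def wife_def fun_eq_iff)

lemma wife_converse [simp]: "wife (\<mu>\<inverse>) = husband \<mu>"
  by (simp add: husband_def wife_def fun_eq_iff)

lemma marriage_converse [simp]: "marriage M W (\<mu>\<inverse>) \<longleftrightarrow> marriage W M \<mu>"
  unfolding marriage_def by auto

lemma stable_converse: "stable M W pM pW (\<mu>\<inverse>) \<longleftrightarrow> stable W M pW pM \<mu>"
  unfolding stable_def by auto

lemma submarriage_converse: "submarriage M W (\<mu>\<inverse>) (\<mu>'\<inverse>) \<longleftrightarrow> submarriage W M \<mu> \<mu>'"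
  unfolding submarriage_def by auto

lemma husband_eq_Some_iff:
  assumes "marriage W M \<mu>"
  shows "husband \<mu> w = Some m \<longleftrightarrow> (w, m) \<in> \<mu>"
proof -
  have unique: "m' = m" if "(w, m) \<in> \<mu>" "(w, m') \<in> \<mu>" for m m'
    using assms that unfolding marriage_def by blast
  show ?thesis
  proof
    assume "husband \<mu> w = Some m"
    then obtain m' where "(w, m') \<in> \<mu>" "m = (THE m. (w, m) \<in> \<mu>)"
      unfolding husband_def by (auto split: if_splits)
    then show "(w, m) \<in> \<mu>"
      using unique the_equality by metis
  next
    assume "(w, m) \<in> \<mu>"
    then show "husband \<mu> w = Some m"
      unfolding husband_def using unique by (auto intro: the_equality)
  qed
qed

lemma wife_eq_Some_iff: "marriage W M \<mu> \<Longrightarrow> wife \<mu> m = Some w \<longleftrightarrow> (w, m) \<in> \<mu>"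
  using husband_eq_Some_iff[of M W "\<mu>\<inverse>" m w] by simp

lemma husband_eq_None_iff: "husband \<mu> w = None \<longleftrightarrow> w \<notin> Domain \<mu>"
  by (auto simp: husband_def)

lemma marriage_Domain_subset: "marriage W M \<mu> \<Longrightarrow> Domain \<mu> \<subseteq> W"
  and marriage_Range_subset: "marriage W M \<mu> \<Longrightarrow> Range \<mu> \<subseteq> M"
  unfolding marriage_def by auto

lemma marriage_mono: "marriage A B \<mu> \<Longrightarrow> A \<subseteq> A' \<Longrightarrow> B \<subseteq> B' \<Longrightarrow> marriage A' B' \<mu>"
  unfolding marriage_def by blast

lemma marriage_union:
  assumes "marriage A B \<mu>" "marriage A' B' \<nu>" "A \<inter> A' = {}" "B \<inter> B' = {}"
  shows "marriage (A \<union> A') (B \<union> B') (\<mu> \<union> \<nu>)"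
  using assms unfolding marriage_def by (auto simp: disjoint_iff)

lemma marriage_graph: "inj_on f A \<Longrightarrow> marriage A (f ` A) ((\<lambda>a. (a, f a)) ` A)"
  unfolding marriage_def inj_on_def by auto

lemma marriage_zip: "distinct xs \<Longrightarrow> distinct ys \<Longrightarrow> marriage (set xs) (set ys) (set (zip xs ys))"
  unfolding marriage_def by (auto simp: set_zip nth_eq_iff_index_eq dest: set_zip_leftD set_zip_rightD)

lemma Domain_set_zip: "length xs = length ys \<Longrightarrow> Domain (set (zip xs ys)) = set xs"
  by (metis fst_eq_Domain map_fst_zip set_map)

lemma Range_set_zip: "length xs = length ys \<Longrightarrow> Range (set (zip xs ys)) = set ys"
  by (metis snd_eq_Range map_snd_zip set_map)

lemma card_Domain_eq_card_Range:
  assumes "marriage W M \<mu>" "finite \<mu>"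
  shows "card (Domain \<mu>) = card (Range \<mu>)"
proof -
  have "inj_on fst \<mu>" "inj_on snd \<mu>"
    using assms(1) unfolding marriage_def inj_on_def by auto
  then show ?thesis
    by (simp add: fst_eq_Domain [symmetric] snd_eq_Range [symmetric] card_image)
qed

locale dummy_extension =
  fixes W W' M M' :: "'a set" and \<sigma> \<tau> :: "'a \<Rightarrow> 'a" and eW eM :: "'a list"
  assumes finite_W: "finite W" and finite_M: "finite M"
    and disjoint: "W \<inter> W' = {}" "M \<inter> M' = {}"
    and bij_\<sigma>: "bij_betw \<sigma> W M'" and bij_\<tau>: "bij_betw \<tau> M W'"
    and eW: "distinct eW" "set eW = W'" and eM: "distinct eM" "set eM = M'"
begin

definition extend_profile :: "('a \<Rightarrow> 'a list) \<Rightarrow> 'a \<Rightarrow> 'a list" where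
  "extend_profile p x =
     (if x \<in> W then complete_list (p x @ [\<sigma> x]) (M \<union> M')
      else if x \<in> W' then complete_list (inv_into M \<tau> x # eM) (M \<union> M') else [])"

definition dummy_matching :: "('a \<times> 'a) set \<Rightarrow> ('a \<times> 'a) set" where
  "dummy_matching \<mu> =
     set (zip (filter (\<lambda>x. x \<in> \<tau> ` Range \<mu>) eW) (filter (\<lambda>y. y \<in> \<sigma> ` Domain \<mu>) eM))"

definition completion :: "('a \<times> 'a) set \<Rightarrow> ('a \<times> 'a) set" where
  "completion \<mu> = \<mu> \<union> (\<lambda>w. (w, \<sigma> w)) ` (W - Domain \<mu>) \<union> (\<lambda>m. (\<tau> m, m)) ` (M - Range \<mu>)
     \<union> dummy_matching \<mu>"

end

text \<open>The men's side of the construction is the same locale with the roles of the two sides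
  exchanged; its lemmas apply to converse marriages.\<close>

sublocale dummy_extension \<subseteq> swapped: dummy_extension M M' W W' \<tau> \<sigma> eM eW
  using finite_W finite_M disjoint bij_\<sigma> bij_\<tau> eW eM by unfold_locales auto

context dummy_extension
begin

lemma finite_M': "finite M'"
  using eM(2) by auto

lemma inj_\<sigma>: "inj_on \<sigma> W" and image_\<sigma>: "\<sigma> ` W = M'"
  using bij_\<sigma> by (auto simp: bij_betw_def)

lemma inj_\<tau>: "inj_on \<tau> M" and image_\<tau>: "\<tau> ` M = W'"
  using bij_\<tau> by (auto simp: bij_betw_def)

lemma extend_profile_women:
  assumes "p \<in> profiles W M" "x \<in> W"
  obtains r where "extend_profile p x = p x @ \<sigma> x # r" "distinct (p x @ \<sigma> x # r)"
    and "set (p x @ \<sigma> x # r) = M \<union> M'" "set (p x) \<subseteq> M"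
proof -
  have p: "distinct (p x)" "set (p x) \<subseteq> M"
    using assms unfolding profiles_def by auto
  moreover have "\<sigma> x \<in> M'"
    using assms(2) image_\<sigma> by auto
  ultimately have l: "distinct (p x @ [\<sigma> x])" "set (p x @ [\<sigma> x]) \<subseteq> M \<union> M'"
    using disjoint(2) by auto
  obtain r where "complete_list (p x @ [\<sigma> x]) (M \<union> M') = p x @ [\<sigma> x] @ r"
    by (metis append_assoc complete_list_eq)
  moreover have "extend_profile p x = complete_list (p x @ [\<sigma> x]) (M \<union> M')"
    using assms(2) by (simp add: extend_profile_def)
  ultimately show thesis
    using that p(2) distinct_complete_list[OF _ l] set_complete_list[OF _ l] finite_M finite_M'
    by simp
qed

lemma extend_profile_dummies:
  assumes "x \<in> W'"
  obtains r where "extend_profile p x = inv_into M \<tau> x # eM @ r"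
    and "distinct (inv_into M \<tau> x # eM @ r)" "set (inv_into M \<tau> x # eM @ r) = M \<union> M'"
proof -
  have "inv_into M \<tau> x \<in> M"
    using assms image_\<tau> by (metis inv_into_into)
  then have l: "distinct (inv_into M \<tau> x # eM)" "set (inv_into M \<tau> x # eM) \<subseteq> M \<union> M'"
    using eM disjoint(2) by auto
  obtain r where "complete_list (inv_into M \<tau> x # eM) (M \<union> M') = inv_into M \<tau> x # eM @ r"
    by (metis append_Cons complete_list_eq)
  moreover have "extend_profile p x = complete_list (inv_into M \<tau> x # eM) (M \<union> M')"
    using assms disjoint(1) by (auto simp: extend_profile_def)
  ultimately show thesis
    using that distinct_complete_list[OF _ l] set_complete_list[OF _ l] finite_M finite_M'
    by simp
qed

lemma set_extend_profile:
  assumes "p \<in> profiles W M" "x \<in> W \<union> W'"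
  shows "set (extend_profile p x) = M \<union> M'" and "distinct (extend_profile p x)"
proof -
  have "set (extend_profile p x) = M \<union> M' \<and> distinct (extend_profile p x)"
  proof (cases "x \<in> W")
    case True
    then show ?thesis
      using extend_profile_women[OF assms(1)] by metis
  next
    case False
    then show ?thesis
      using extend_profile_dummies assms(2) by (metis Un_iff)
  qed
  then show "set (extend_profile p x) = M \<union> M'" "distinct (extend_profile p x)"
    by auto
qed

lemma extend_profile_full:
  assumes "p \<in> profiles W M"
  shows "extend_profile p \<in> full_profiles (W \<union> W') (M \<union> M')"
proof -
  have "extend_profile p x = []" if "x \<notin> W \<union> W'" for x
    using that by (simp add: extend_profile_def)
  then show ?thesis
    using set_extend_profile[OF assms] unfolding full_profiles_def profiles_def by auto
qed

lemma dummy_matching_converse: "swapped.dummy_matching (\<mu>\<inverse>) = (dummy_matching \<mu>)\<inverse>"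
  unfolding dummy_matching_def swapped.dummy_matching_def by (subst zip_commute) auto

lemma completion_converse: "swapped.completion (\<mu>\<inverse>) = (completion \<mu>)\<inverse>"
  unfolding completion_def swapped.completion_def dummy_matching_converse by auto

context
  fixes \<mu> assumes \<mu>: "marriage W M \<mu>"
begin

lemma length_filter_dummies:
  "length (filter (\<lambda>x. x \<in> \<tau> ` Range \<mu>) eW) = length (filter (\<lambda>y. y \<in> \<sigma> ` Domain \<mu>) eM)"
proof -
  have "\<mu> \<subseteq> W \<times> M"
    using \<mu> unfolding marriage_def by simp
  then have "finite \<mu>"
    using finite_W finite_M by (simp add: finite_subset)
  have "{x. x \<in> \<tau> ` Range \<mu>} \<inter> set eW = \<tau> ` Range \<mu>"
    using marriage_Range_subset[OF \<mu>] image_\<tau> eW(2) by auto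
  then have "length (filter (\<lambda>x. x \<in> \<tau> ` Range \<mu>) eW) = card (Range \<mu>)"
    using card_image[OF inj_on_subset[OF inj_\<tau> marriage_Range_subset[OF \<mu>]]] eW(1)
    by (simp add: distinct_length_filter)
  also have "\<dots> = card (Domain \<mu>)"
    using card_Domain_eq_card_Range[OF \<mu> \<open>finite \<mu>\<close>] by simp
  also have "\<dots> = length (filter (\<lambda>y. y \<in> \<sigma> ` Domain \<mu>) eM)"
  proof -
    have "{y. y \<in> \<sigma> ` Domain \<mu>} \<inter> set eM = \<sigma> ` Domain \<mu>"
      using marriage_Domain_subset[OF \<mu>] image_\<sigma> eM(2) by auto
    then show ?thesis
      using card_image[OF inj_on_subset[OF inj_\<sigma> marriage_Domain_subset[OF \<mu>]]] eM(1)
      by (simp add: distinct_length_filter)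
  qed
  finally show ?thesis .
qed

lemma Domain_dummy_matching: "Domain (dummy_matching \<mu>) = \<tau> ` Range \<mu>"
  using length_filter_dummies marriage_Range_subset[OF \<mu>] image_\<tau> eW
  by (auto simp: dummy_matching_def Domain_set_zip)

lemma Range_dummy_matching: "Range (dummy_matching \<mu>) = \<sigma> ` Domain \<mu>"
  using length_filter_dummies marriage_Domain_subset[OF \<mu>] image_\<sigma> eM
  by (auto simp: dummy_matching_def Range_set_zip)

lemma marriage_dummy_matching: "marriage (\<tau> ` Range \<mu>) (\<sigma> ` Domain \<mu>) (dummy_matching \<mu>)"
proof -
  have "marriage (set (filter (\<lambda>x. x \<in> \<tau> ` Range \<mu>) eW)) (set (filter (\<lambda>y. y \<in> \<sigma> ` Domain \<mu>) eM))
      (dummy_matching \<mu>)"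
    unfolding dummy_matching_def by (rule marriage_zip) (simp_all add: eW eM)
  then show ?thesis
    by (rule marriage_mono) auto
qed

lemma dummy_matching_mono:
  assumes "(x, h) \<in> dummy_matching \<mu>" "(g, y) \<in> dummy_matching \<mu>" "precedes eW x g"
  shows "precedes eM h y"
proof -
  let ?P = "\<lambda>x. x \<in> \<tau> ` Range \<mu>" and ?Q = "\<lambda>y. y \<in> \<sigma> ` Domain \<mu>"
  have "?P x" "?P g" "?Q h" "?Q y"
    using assms(1,2) unfolding dummy_matching_def by (auto dest: set_zip_leftD set_zip_rightD)
  then have "precedes (filter ?P eW) x g"
    using assms(3) by (simp add: precedes_filter_iff)
  then have "precedes (filter ?Q eM) h y"
    using precedes_zip_mono[of "filter ?P eW" "filter ?Q eM"] assms(1,2) eW(1) eM(1)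
    unfolding dummy_matching_def by simp
  then show ?thesis
    using \<open>?Q h\<close> \<open>?Q y\<close> by (simp add: precedes_filter_iff)
qed

lemma marriage_singles_to_dummies:
  "marriage (W \<union> \<tau> ` (M - Range \<mu>)) (M \<union> \<sigma> ` (W - Domain \<mu>))
     (\<mu> \<union> (\<lambda>w. (w, \<sigma> w)) ` (W - Domain \<mu>) \<union> (\<lambda>m. (\<tau> m, m)) ` (M - Range \<mu>))"
proof -
  let ?G\<sigma> = "(\<lambda>w. (w, \<sigma> w)) ` (W - Domain \<mu>)" and ?G\<tau> = "(\<lambda>m. (\<tau> m, m)) ` (M - Range \<mu>)"
  have "marriage (Domain \<mu>) (Range \<mu>) \<mu>"
    using \<mu> unfolding marriage_def by auto
  moreover have "marriage (W - Domain \<mu>) (\<sigma> ` (W - Domain \<mu>)) ?G\<sigma>"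
    by (rule marriage_graph) (rule inj_on_subset[OF inj_\<sigma>], blast)
  moreover have "Range \<mu> \<inter> \<sigma> ` (W - Domain \<mu>) = {}"
    using marriage_Range_subset[OF \<mu>] image_\<sigma> disjoint(2) by blast
  ultimately have "marriage W (Range \<mu> \<union> \<sigma> ` (W - Domain \<mu>)) (\<mu> \<union> ?G\<sigma>)"
    using marriage_union[of "Domain \<mu>" "Range \<mu>" \<mu> "W - Domain \<mu>"] marriage_Domain_subset[OF \<mu>]
    by (simp add: Un_absorb1)
  moreover have "marriage (\<tau> ` (M - Range \<mu>)) (M - Range \<mu>) ?G\<tau>"
  proof -
    have "marriage (M - Range \<mu>) (\<tau> ` (M - Range \<mu>)) ((\<lambda>m. (m, \<tau> m)) ` (M - Range \<mu>))"
      by (rule marriage_graph) (rule inj_on_subset[OF inj_\<tau>], blast)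
    moreover have "((\<lambda>m. (m, \<tau> m)) ` (M - Range \<mu>))\<inverse> = ?G\<tau>"
      by auto
    ultimately show ?thesis
      using marriage_converse by metis
  qed
  moreover have "W \<inter> \<tau> ` (M - Range \<mu>) = {}" "(Range \<mu> \<union> \<sigma> ` (W - Domain \<mu>)) \<inter> (M - Range \<mu>) = {}"
    using image_\<sigma> image_\<tau> disjoint by auto
  ultimately have "marriage (W \<union> \<tau> ` (M - Range \<mu>)) (Range \<mu> \<union> \<sigma> ` (W - Domain \<mu>) \<union> (M - Range \<mu>))
      (\<mu> \<union> ?G\<sigma> \<union> ?G\<tau>)"
    by (rule marriage_union)
  moreover have "Range \<mu> \<union> \<sigma> ` (W - Domain \<mu>) \<union> (M - Range \<mu>) = M \<union> \<sigma> ` (W - Domain \<mu>)"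
    using marriage_Range_subset[OF \<mu>] by blast
  ultimately show ?thesis
    by simp
qed

lemma marriage_completion: "marriage (W \<union> W') (M \<union> M') (completion \<mu>)"
proof -
  have "\<tau> ` (M - Range \<mu>) \<inter> \<tau> ` Range \<mu> = {}" "\<sigma> ` (W - Domain \<mu>) \<inter> \<sigma> ` Domain \<mu> = {}"
    by (auto simp: inj_on_image_set_diff[OF inj_\<tau> Diff_subset marriage_Range_subset[OF \<mu>]]
        inj_on_image_set_diff[OF inj_\<sigma> Diff_subset marriage_Domain_subset[OF \<mu>]])
  moreover have "\<tau> ` Range \<mu> \<subseteq> W'" "\<sigma> ` Domain \<mu> \<subseteq> M'"
    using marriage_Domain_subset[OF \<mu>] marriage_Range_subset[OF \<mu>] image_\<sigma> image_\<tau> by auto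
  then have "W \<inter> \<tau> ` Range \<mu> = {}" "M \<inter> \<sigma> ` Domain \<mu> = {}"
    using disjoint by auto
  ultimately have "(W \<union> \<tau> ` (M - Range \<mu>)) \<inter> \<tau> ` Range \<mu> = {}"
    "(M \<union> \<sigma> ` (W - Domain \<mu>)) \<inter> \<sigma> ` Domain \<mu> = {}"
    by (simp_all add: Int_Un_distrib2)
  with marriage_singles_to_dummies marriage_dummy_matching
  have "marriage (W \<union> \<tau> ` (M - Range \<mu>) \<union> \<tau> ` Range \<mu>) (M \<union> \<sigma> ` (W - Domain \<mu>) \<union> \<sigma> ` Domain \<mu>)
      (completion \<mu>)"
    unfolding completion_def by (rule marriage_union)
  moreover have "W \<union> \<tau> ` (M - Range \<mu>) \<union> \<tau> ` Range \<mu> = W \<union> W'"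
    "M \<union> \<sigma> ` (W - Domain \<mu>) \<union> \<sigma> ` Domain \<mu> = M \<union> M'"
    using marriage_Domain_subset[OF \<mu>] marriage_Range_subset[OF \<mu>] image_\<sigma> image_\<tau> by auto
  ultimately show ?thesis
    by simp
qed

lemma Domain_completion: "Domain (completion \<mu>) = W \<union> W'"
proof -
  have "Domain (completion \<mu>) = Domain \<mu> \<union> (W - Domain \<mu>) \<union> \<tau> ` (M - Range \<mu>) \<union> \<tau> ` Range \<mu>"
    unfolding completion_def Domain_Un_eq Domain_dummy_matching
    by (simp add: fst_eq_Domain [symmetric] image_image)
  also have "\<dots> = W \<union> W'"
    using marriage_Domain_subset[OF \<mu>] marriage_Range_subset[OF \<mu>] image_\<tau> by auto
  finally show ?thesis .
qed

lemma Range_completion: "Range (completion \<mu>) = M \<union> M'"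
proof -
  have "Range (completion \<mu>) = Range \<mu> \<union> \<sigma> ` (W - Domain \<mu>) \<union> (M - Range \<mu>) \<union> \<sigma> ` Domain \<mu>"
    unfolding completion_def Range_Un_eq Range_dummy_matching
    by (simp add: snd_eq_Range [symmetric] image_image)
  also have "\<dots> = M \<union> M'"
    using marriage_Domain_subset[OF \<mu>] marriage_Range_subset[OF \<mu>] image_\<sigma> by auto
  finally show ?thesis .
qed

lemma completion_women_iff:
  assumes "x \<in> W"
  shows "(x, h) \<in> completion \<mu> \<longleftrightarrow> (x, h) \<in> \<mu> \<or> x \<notin> Domain \<mu> \<and> h = \<sigma> x"
proof -
  have "x \<notin> Domain (dummy_matching \<mu>)" "x \<notin> \<tau> ` M"
    using assms marriage_Range_subset[OF \<mu>] image_\<tau> disjoint(1)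
    unfolding Domain_dummy_matching by auto
  then show ?thesis
    unfolding completion_def using assms by auto
qed

lemma completion_dummy:
  assumes "x \<in> W'" "(x, h) \<in> completion \<mu>" "h \<noteq> inv_into M \<tau> x"
  shows "(x, h) \<in> dummy_matching \<mu>"
  using assms marriage_Domain_subset[OF \<mu>] disjoint(1) inv_into_f_f[OF inj_\<tau>]
  unfolding completion_def by auto

end

end

context dummy_extension
begin

lemma completion_partner_preference:
  assumes "marriage W M \<mu>" "p \<in> profiles W M" "\<forall>(w, m) \<in> \<mu>. m \<in> set (p w)"
    and "x \<in> W" "(x, h) \<in> completion \<mu>" "precedes (extend_profile p x) y h"
  shows "y \<in> M \<and> prefers p x y (husband \<mu> x)"
proof -
  obtain r where r: "extend_profile p x = p x @ \<sigma> x # r" "distinct (p x @ \<sigma> x # r)"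
    and "set (p x) \<subseteq> M"
    using extend_profile_women[OF assms(2,4)] by metis
  have "\<sigma> x \<notin> M"
    using assms(4) image_\<sigma> disjoint(2) by auto
  note above_partner = precedes_append_Cons_prefixD[OF r(2) _ assms(6)[unfolded r(1)]]
  consider "(x, h) \<in> \<mu>" | "x \<notin> Domain \<mu>" "h = \<sigma> x"
    using completion_women_iff[OF assms(1,4)] assms(5) by blast
  then show ?thesis
  proof cases
    case 1
    then have "h \<in> set (p x)" "husband \<mu> x = Some h"
      using assms(3) husband_eq_Some_iff[OF assms(1)] by auto
    moreover have "h \<noteq> \<sigma> x"
      using 1 assms(1) \<open>\<sigma> x \<notin> M\<close> unfolding marriage_def by auto
    ultimately show ?thesis
      using above_partner \<open>set (p x) \<subseteq> M\<close> unfolding prefers_def by auto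
  next
    case 2
    then show ?thesis
      using above_partner \<open>set (p x) \<subseteq> M\<close>
      unfolding prefers_def husband_eq_None_iff[THEN iffD2, OF 2(1)] by auto
  qed
qed

lemma completion_dummy_partner_preference:
  assumes "marriage W M \<mu>" "x \<in> W'" "y \<in> M'" "(x, h) \<in> completion \<mu>"
    and "precedes (extend_profile p x) y h"
  shows "(x, h) \<in> dummy_matching \<mu> \<and> precedes eM y h"
proof -
  let ?m = "inv_into M \<tau> x"
  obtain r where r: "extend_profile p x = ?m # eM @ r" "distinct (?m # eM @ r)"
    using extend_profile_dummies[OF assms(2)] by metis
  have "?m \<in> M"
    using assms(2) image_\<tau> by (metis inv_into_into)
  then have "?m \<noteq> y"
    using assms(3) disjoint(2) by auto
  then have "precedes (eM @ r) y h"
    using assms(5) r(1) by simp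
  moreover have "h \<noteq> ?m"
    using calculation r(2) precedes_imp_in_set by fastforce
  ultimately have "(x, h) \<in> dummy_matching \<mu>" "precedes (eM @ r) y h"
    using completion_dummy[OF assms(1,2,4)] by auto
  moreover have "h \<in> set eM"
    using calculation(1) Range_dummy_matching[OF assms(1)] marriage_Domain_subset[OF assms(1)]
      image_\<sigma> eM(2)
    by blast
  ultimately show ?thesis
    using r(2) precedes_imp_in_set[of r y h] by (auto simp: precedes_append)
qed

lemma submarriage_completion: "marriage W M \<mu> \<Longrightarrow> submarriage W M \<mu> (completion \<mu>)"
  using completion_women_iff image_\<sigma> disjoint(2) unfolding submarriage_def by blast

lemma prefers_extension_of_prefers:
  assumes "pW \<in> profiles W M" "marriage W M \<mu>" "marriage (W \<union> W') (M \<union> M') \<mu>'"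
    and "submarriage W M \<mu> \<mu>'" "w \<in> W" "m \<in> M" "prefers pW w m (husband \<mu> w)"
  shows "prefers (extend_profile pW) w m (husband \<mu>' w)"
proof -
  obtain r where r: "extend_profile pW w = pW w @ \<sigma> w # r" "set (pW w @ \<sigma> w # r) = M \<union> M'"
    and "set (pW w) \<subseteq> M"
    using extend_profile_women[OF assms(1,5)] by metis
  have "m \<in> set (pW w)"
    using assms(7) unfolding prefers_def by simp
  show ?thesis
  proof (cases "husband \<mu>' w")
    case None
    then show ?thesis
      using r assms(6) unfolding prefers_def by simp
  next
    case (Some h)
    then have "(w, h) \<in> \<mu>'"
      using husband_eq_Some_iff[OF assms(3)] by simp
    then have "h \<in> set (extend_profile pW w)"
      using assms(3) r unfolding marriage_def by auto
    have "precedes (pW w) m h \<or> h \<notin> set (pW w)"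
    proof (cases "h \<in> M")
      case True
      then have "husband \<mu> w = Some h"
        using \<open>(w, h) \<in> \<mu>'\<close> assms(4,5) husband_eq_Some_iff[OF assms(2)]
        unfolding submarriage_def by blast
      then show ?thesis
        using assms(7) unfolding prefers_def by auto
    next
      case False
      then show ?thesis
        using \<open>set (pW w) \<subseteq> M\<close> by auto
    qed
    then have "precedes (extend_profile pW w) m h"
      using precedes_append_leftI[OF \<open>m \<in> set (pW w)\<close>, of h "\<sigma> w # r"]
        \<open>h \<in> set (extend_profile pW w)\<close> r(1)
      by simp
    then show ?thesis
      using Some \<open>h \<in> set (extend_profile pW w)\<close> by (simp add: prefers_Some_iff)
  qed
qed

lemma acceptable_of_stable_extension:
  assumes "pW \<in> profiles W M" "marriage W M \<mu>" "marriage (W \<union> W') (M \<union> M') \<mu>'"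
    and "stable (W \<union> W') (M \<union> M') (extend_profile pW) (swapped.extend_profile pM) \<mu>'"
    and "submarriage W M \<mu> \<mu>'" "(w, m) \<in> \<mu>"
  shows "m \<in> set (pW w)"
proof (rule ccontr)
  assume unacceptable: "m \<notin> set (pW w)"
  have "w \<in> W" "m \<in> M"
    using assms(2,6) unfolding marriage_def by auto
  then have "(w, m) \<in> \<mu>'"
    using assms(5,6) unfolding submarriage_def by blast
  have "\<sigma> w \<in> M'"
    using \<open>w \<in> W\<close> image_\<sigma> by auto
  then have "m \<noteq> \<sigma> w"
    using \<open>m \<in> M\<close> disjoint(2) by auto
  obtain r where r: "extend_profile pW w = pW w @ \<sigma> w # r" "set (pW w @ \<sigma> w # r) = M \<union> M'"
    using extend_profile_women[OF assms(1) \<open>w \<in> W\<close>] by metis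
  then have "m \<in> set r"
    using unacceptable \<open>m \<in> M\<close> \<open>m \<noteq> \<sigma> w\<close> by auto
  moreover have "husband \<mu>' w = Some m"
    using husband_eq_Some_iff[OF assms(3)] \<open>(w, m) \<in> \<mu>'\<close> by simp
  ultimately have "prefers (extend_profile pW) w (\<sigma> w) (husband \<mu>' w)"
    using r \<open>\<sigma> w \<in> M'\<close> by (simp add: prefers_def precedes_append)
  moreover have "prefers (swapped.extend_profile pM) (\<sigma> w) w (wife \<mu>' (\<sigma> w))"
  proof -
    obtain r' where "swapped.extend_profile pM (\<sigma> w) = w # eW @ r'"
      using swapped.extend_profile_dummies[OF \<open>\<sigma> w \<in> M'\<close>] inv_into_f_f[OF inj_\<sigma> \<open>w \<in> W\<close>]
      by metis
    moreover have "wife \<mu>' (\<sigma> w) \<noteq> Some w"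
      using wife_eq_Some_iff[OF assms(3)] \<open>(w, m) \<in> \<mu>'\<close> \<open>m \<noteq> \<sigma> w\<close> assms(3)
      unfolding marriage_def by blast
    ultimately show ?thesis
      by (rule prefers_first_choice)
  qed
  ultimately show False
    using assms(4) \<open>w \<in> W\<close> \<open>\<sigma> w \<in> M'\<close> unfolding stable_def by blast
qed

end

context dummy_extension
begin

lemma completion_no_blocking_pair:
  assumes "stable W M pW pM \<mu>" "marriage W M \<mu>" "pW \<in> profiles W M" "pM \<in> profiles M W"
    and "x \<in> W \<union> W'" "(x, h) \<in> completion \<mu>" "precedes (extend_profile pW x) y h"
    and "y \<in> M \<union> M'" "(g, y) \<in> completion \<mu>" "precedes (swapped.extend_profile pM y) x g"
  shows False
proof -
  have conv: "marriage M W (\<mu>\<inverse>)" "\<forall>(m, w) \<in> \<mu>\<inverse>. w \<in> set (pM m)"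
    "(y, g) \<in> swapped.completion (\<mu>\<inverse>)"
    using assms(1,2,9) completion_converse unfolding stable_def by auto
  have man_side: "y \<in> M \<Longrightarrow> x \<in> W \<and> prefers pM y x (wife \<mu> y)"
    using swapped.completion_partner_preference[OF conv(1) assms(4) conv(2) _ conv(3) assms(10)]
    by simp
  have dummy_man_side: "y \<in> M' \<Longrightarrow> x \<in> W' \<Longrightarrow> (g, y) \<in> dummy_matching \<mu> \<and> precedes eW x g"
    using swapped.completion_dummy_partner_preference[OF conv(1) _ _ conv(3) assms(10)]
    unfolding dummy_matching_converse by auto
  show False
  proof (cases "x \<in> W")
    case True
    moreover have "\<forall>(w, m) \<in> \<mu>. m \<in> set (pW w)"
      using assms(1) unfolding stable_def by auto
    ultimately have "y \<in> M" "prefers pW x y (husband \<mu> x)"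
      using completion_partner_preference[OF assms(2,3) _ _ assms(6,7)] by auto
    then show False
      using man_side assms(1) \<open>x \<in> W\<close> unfolding stable_def by blast
  next
    case False
    then have "x \<in> W'" "y \<in> M'"
      using assms(5,8) man_side by auto
    then have "precedes eM y h" "precedes eM h y"
      using completion_dummy_partner_preference[OF assms(2) _ _ assms(6,7)] dummy_man_side
        dummy_matching_mono[OF assms(2)] by auto
    then show False
      using precedes_asym[OF eM(1)] by blast
  qed
qed

lemma stable_completion:
  assumes "stable W M pW pM \<mu>" "marriage W M \<mu>" "pW \<in> profiles W M" "pM \<in> profiles M W"
  shows "stable (W \<union> W') (M \<union> M') (extend_profile pW) (swapped.extend_profile pM) (completion \<mu>)"
proof -
  let ?\<mu>' = "completion \<mu>"
  have \<mu>': "marriage (W \<union> W') (M \<union> M') ?\<mu>'"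
    by (rule marriage_completion[OF assms(2)])
  have lists: "y \<in> set (extend_profile pW x) \<and> x \<in> set (swapped.extend_profile pM y)"
    if "x \<in> W \<union> W'" "y \<in> M \<union> M'" for x y
    using that set_extend_profile(1)[OF assms(3)] swapped.set_extend_profile(1)[OF assms(4)] by blast
  have False
    if xy: "x \<in> W \<union> W'" "y \<in> M \<union> M'"
      and prefs: "prefers (extend_profile pW) x y (husband ?\<mu>' x)"
        "prefers (swapped.extend_profile pM) y x (wife ?\<mu>' y)" for x y
  proof -
    obtain h g where xh: "(x, h) \<in> ?\<mu>'" and gy: "(g, y) \<in> ?\<mu>'"
      using xy Domain_completion[OF assms(2)] Range_completion[OF assms(2)] by blast
    then have "h \<in> M \<union> M'" "g \<in> W \<union> W'"
      using \<mu>' unfolding marriage_def by auto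
    then have "h \<in> set (extend_profile pW x)" "g \<in> set (swapped.extend_profile pM y)"
      using lists[OF xy(1)] lists[OF _ xy(2)] by auto
    moreover have "husband ?\<mu>' x = Some h" "wife ?\<mu>' y = Some g"
      using xh gy husband_eq_Some_iff[OF \<mu>'] wife_eq_Some_iff[OF \<mu>'] by auto
    ultimately show False
      using completion_no_blocking_pair[OF assms xy(1) xh _ xy(2) gy] prefs
      by (simp add: prefers_Some_iff)
  qed
  moreover have "(x, y) \<in> ?\<mu>' \<Longrightarrow> x \<in> W \<union> W' \<and> y \<in> M \<union> M'" for x y
    using \<mu>' unfolding marriage_def by auto
  ultimately show ?thesis
    unfolding stable_def using lists by blast
qed

lemma stable_of_stable_extension:
  assumes "pW \<in> profiles W M" "pM \<in> profiles M W" "marriage W M \<mu>" "marriage (W \<union> W') (M \<union> M') \<mu>'"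
    and "stable (W \<union> W') (M \<union> M') (extend_profile pW) (swapped.extend_profile pM) \<mu>'"
    and "submarriage W M \<mu> \<mu>'"
  shows "stable W M pW pM \<mu>"
proof -
  have conv: "marriage M W (\<mu>\<inverse>)" "marriage (M \<union> M') (W \<union> W') (\<mu>'\<inverse>)"
    "stable (M \<union> M') (W \<union> W') (swapped.extend_profile pM) (extend_profile pW) (\<mu>'\<inverse>)"
    "submarriage M W (\<mu>\<inverse>) (\<mu>'\<inverse>)"
    using assms(3-6) by (simp_all add: stable_converse submarriage_converse)
  have "m \<in> set (pW w) \<and> w \<in> set (pM m)" if "(w, m) \<in> \<mu>" for w m
    using acceptable_of_stable_extension[OF assms(1,3-6) that]
      swapped.acceptable_of_stable_extension[OF assms(2) conv] that by simp
  moreover have False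
    if "w \<in> W" "m \<in> M" "prefers pW w m (husband \<mu> w)" "prefers pM m w (wife \<mu> m)" for w m
  proof -
    have "prefers (extend_profile pW) w m (husband \<mu>' w)"
      using prefers_extension_of_prefers[OF assms(1,3,4,6) that(1-3)] .
    moreover have "prefers (swapped.extend_profile pM) m w (wife \<mu>' m)"
      using swapped.prefers_extension_of_prefers[OF assms(2) conv(1,2,4) that(2,1)] that(4) by simp
    ultimately show False
      using assms(5) that(1,2) unfolding stable_def by blast
  qed
  ultimately show ?thesis
    unfolding stable_def by blast
qed

end

theorem lemma20:
  fixes n :: nat and W W' M M' :: "'a set"
  assumes "finite W" "finite W'" "finite M" "finite M'"
    and "card W = n" "card W' = n" "card M = n" "card M' = n"
    and "W \<inter> W' = {}" "W \<inter> M = {}" "W \<inter> M' = {}"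
    and "W' \<inter> M = {}" "W' \<inter> M' = {}" "M \<inter> M' = {}"
  shows "\<exists>fW fM.
     (\<forall>pW \<in> profiles W M. fW pW \<in> full_profiles (W \<union> W') (M \<union> M')) \<and>
     (\<forall>pM \<in> profiles M W. fM pM \<in> full_profiles (M \<union> M') (W \<union> W')) \<and>
     (\<forall>pW \<in> profiles W M. \<forall>pM \<in> profiles M W. \<forall>\<mu>. marriage W M \<mu> \<longrightarrow>
        (stable W M pW pM \<mu> \<longleftrightarrow>
         (\<exists>\<mu>'. marriage (W \<union> W') (M \<union> M') \<mu>' \<and>
               stable (W \<union> W') (M \<union> M') (fW pW) (fM pM) \<mu>' \<and>
               submarriage W M \<mu> \<mu>')))"
proof -
  obtain \<sigma> \<tau> where "bij_betw \<sigma> W M'" "bij_betw \<tau> M W'"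
    using finite_same_card_bij assms(1-8) by metis
  moreover obtain eW eM where "distinct eW" "set eW = W'" "distinct eM" "set eM = M'"
    using finite_distinct_list assms(2,4) by metis
  ultimately interpret dummy_extension W W' M M' \<sigma> \<tau> eW eM
    using assms by unfold_locales auto
  have "stable W M pW pM \<mu> \<longleftrightarrow> (\<exists>\<mu>'. marriage (W \<union> W') (M \<union> M') \<mu>' \<and>
      stable (W \<union> W') (M \<union> M') (extend_profile pW) (swapped.extend_profile pM) \<mu>' \<and>
      submarriage W M \<mu> \<mu>')"
    if "pW \<in> profiles W M" "pM \<in> profiles M W" "marriage W M \<mu>" for pW pM \<mu>
    using that stable_completion marriage_completion submarriage_completion stable_of_stable_extension
    by blast
  then show ?thesis
    using extend_profile_full swapped.extend_profile_full by blast
qed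

end
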